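(* Let $\mathbb V\subset\mathbb W$ be Hilbert spaces with bounded inclusion, $\mathbb V$ dense in $\mathbb W$ and $\mathbb V$ separable. Let $\mathcal L_N,\mathcal L:\mathbb V\to\mathbb W$ be bounded operators that are self-adjoint (as operators on $\mathbb W$ with dense domain $\mathbb V$) and have pure-point spectrum. Let $\lambda$ be an eigenvalue of $\mathcal L$ of finite geometric multiplicity and $\delta>0$ such that $\lambda$ is at distance more than $3\delta$ from all other elements of the spectrum of $\mathcal L$. Suppose there exists $N_0=N_0(\lambda,\delta)$ such that for $\delta\le|z-\lambda|\le2\delta$ and $N>N_0$, $z\,\mathrm{id}-\mathcal L_N$ is invertible on $\mathbb W$, and $$\|(z\,\mathrm{id}-\mathcal L)^{-1}(\mathcal L-\mathcal L_N)v\|_{\mathbb W}\to0,\qquad\|(z\,\mathrm{id}-\mathcal L_N)^{-1}(\mathcal L-\mathcal L_N)u\|_{\mathbb W}\to0$$ as $N\to\infty$, uniformly in $z$ with $\delta\le|z-\lambda|\le2\delta$, for all $\mathbb W$-normalized eigenfunctions $v$ of $\mathcal L_N$ and $u$ of $\mathcal L$ associated with eigenvalues lying in $\{z\in\mathbb C:|z-\lambda|\le\delta\}$. Then there exists $N_0'$ such that for $N>N_0'$ the geometric multiplicity of $\lambda$ equals the sum of the geometric multiplicities of the eigenvalues $\lambda'$ of $\mathcal L_N$ satisfying $|\lambda'-\lambda|<\delta$. *)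

theory Defs
  imports "HOL-Analysis.Analysis"
begin

text \<open>HOL-Analysis only provides real inner product spaces; complex Hilbert spaces
  are introduced here as a type class: a real normed vector space with a compatible
  complex scalar multiplication and a complex inner product inducing the norm
  (linear in the second, conjugate-linear in the first argument).\<close>

class complex_inner = real_normed_vector +
  fixes scaleC :: "complex \<Rightarrow> 'a \<Rightarrow> 'a" (infixr "*\<^sub>C" 75)
    and cinner :: "'a \<Rightarrow> 'a \<Rightarrow> complex"
  assumes scaleC_add_right: "a *\<^sub>C (x + y) = a *\<^sub>C x + a *\<^sub>C y"
    and scaleC_add_left: "(a + b) *\<^sub>C x = a *\<^sub>C x + b *\<^sub>C x"
    and scaleC_scaleC: "a *\<^sub>C (b *\<^sub>C x) = (a * b) *\<^sub>C x"
    and scaleC_one: "1 *\<^sub>C x = x"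
    and scaleC_of_real: "complex_of_real r *\<^sub>C x = r *\<^sub>R x"
    and cinner_commute: "cinner x y = cnj (cinner y x)"
    and cinner_add_right: "cinner x (y + z) = cinner x y + cinner x z"
    and cinner_scaleC_right: "cinner x (a *\<^sub>C y) = a * cinner x y"
    and cinner_norm: "cinner x x = complex_of_real ((norm x)\<^sup>2)"

class chilbert_space = complex_inner + complete_space

interpretation cvs: vector_space "scaleC :: complex \<Rightarrow> 'a::complex_inner \<Rightarrow> 'a"
  by unfold_locales (simp_all add: scaleC_add_right scaleC_add_left scaleC_scaleC scaleC_one)

definition clinear :: "('a::complex_inner \<Rightarrow> 'b::complex_inner) \<Rightarrow> bool" where
  "clinear f \<longleftrightarrow> (\<forall>x y. f (x + y) = f x + f y) \<and> (\<forall>a x. f (a *\<^sub>C x) = a *\<^sub>C f x)"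

definition bounded_clinear :: "('a::complex_inner \<Rightarrow> 'b::complex_inner) \<Rightarrow> bool" where
  "bounded_clinear f \<longleftrightarrow> clinear f \<and> (\<exists>K. \<forall>x. norm (f x) \<le> norm x * K)"

text \<open>Setting: \<iota> :: 'v \<Rightarrow> 'w is the (injective, bounded, dense) inclusion
  V \<subseteq> W; an operator T :: 'v \<Rightarrow> 'w is regarded as an unbounded operator on W with
  domain range \<iota>.\<close>

text \<open>Self-adjointness on W with domain V: T is symmetric and the domain of the
  adjoint T* is contained in the domain of T (so T* = T).\<close>
definition self_adjoint_on :: "('v::complex_inner \<Rightarrow> 'w::complex_inner) \<Rightarrow> ('v \<Rightarrow> 'w) \<Rightarrow> bool" where
  "self_adjoint_on \<iota> T \<longleftrightarrow>
     (\<forall>x y. cinner (T x) (\<iota> y) = cinner (\<iota> x) (T y)) \<and>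
     (\<forall>w w'. (\<forall>x. cinner (T x) w = cinner (\<iota> x) w') \<longrightarrow> w \<in> range \<iota>)"

definition eigenspace :: "('v::complex_inner \<Rightarrow> 'w::complex_inner) \<Rightarrow> ('v \<Rightarrow> 'w) \<Rightarrow> complex \<Rightarrow> 'v set" where
  "eigenspace \<iota> T \<mu> = {v. T v = \<mu> *\<^sub>C \<iota> v}"

definition is_eigenvalue :: "('v::complex_inner \<Rightarrow> 'w::complex_inner) \<Rightarrow> ('v \<Rightarrow> 'w) \<Rightarrow> complex \<Rightarrow> bool" where
  "is_eigenvalue \<iota> T \<mu> \<longleftrightarrow> (\<exists>v. v \<noteq> 0 \<and> v \<in> eigenspace \<iota> T \<mu>)"

definition finite_geom_mult :: "('v::complex_inner \<Rightarrow> 'w::complex_inner) \<Rightarrow> ('v \<Rightarrow> 'w) \<Rightarrow> complex \<Rightarrow> bool" where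
  "finite_geom_mult \<iota> T \<mu> \<longleftrightarrow>
     (\<exists>B. finite B \<and> B \<subseteq> eigenspace \<iota> T \<mu> \<and> cvs.span B = eigenspace \<iota> T \<mu>)"

definition geom_mult :: "('v::complex_inner \<Rightarrow> 'w::complex_inner) \<Rightarrow> ('v \<Rightarrow> 'w) \<Rightarrow> complex \<Rightarrow> nat" where
  "geom_mult \<iota> T \<mu> = cvs.dim (eigenspace \<iota> T \<mu>)"

definition pure_point_spectrum :: "('v::complex_inner \<Rightarrow> 'w::complex_inner) \<Rightarrow> ('v \<Rightarrow> 'w) \<Rightarrow> bool" where
  "pure_point_spectrum \<iota> T \<longleftrightarrow>
     closure (cvs.span (\<iota> ` (\<Union>\<mu>. eigenspace \<iota> T \<mu>))) = UNIV"

definition resolvent_ok :: "('v::complex_inner \<Rightarrow> 'w::complex_inner) \<Rightarrow> ('v \<Rightarrow> 'w) \<Rightarrow> complex \<Rightarrow> bool" where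
  "resolvent_ok \<iota> T z \<longleftrightarrow>
     bij (\<lambda>v. z *\<^sub>C \<iota> v - T v) \<and> bounded_clinear (\<iota> \<circ> inv (\<lambda>v. z *\<^sub>C \<iota> v - T v))"

definition cspectrum :: "('v::complex_inner \<Rightarrow> 'w::complex_inner) \<Rightarrow> ('v \<Rightarrow> 'w) \<Rightarrow> complex set" where
  "cspectrum \<iota> T = {z. \<not> resolvent_ok \<iota> T z}"

definition resolvent :: "('v::complex_inner \<Rightarrow> 'w::complex_inner) \<Rightarrow> ('v \<Rightarrow> 'w) \<Rightarrow> complex \<Rightarrow> 'w \<Rightarrow> 'w" where
  "resolvent \<iota> T z w = \<iota> (inv (\<lambda>v. z *\<^sub>C \<iota> v - T v) w)"

end

theory Submission
  imports Defs
begin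

text \<open>
  Fix z with |z - lam| = \<delta> and let R be the resolvent of an operator T at z. On an
  eigenvector with eigenvalue \<nu>, the operator (z - \<mu>) R - 1 acts as multiplication by
  (\<nu> - \<mu>) / (z - \<nu>), and on any v it equals R (T - \<mu>) v. For pure point spectrum this bounds
  the distance from v to the span of the eigenvectors whose eigenvalues keep that factor away
  from zero by a multiple of the norm of R (T - \<mu>) v. By the spectral gap 3\<delta>, a normalised
  eigenvector v of L_N with eigenvalue in the \<delta>-disc is thus within 2 norm (R_L (L - L_N) v)
  of the lam-eigenspace of L, and a normalised lam-eigenvector u of L is within
  2 norm (R_L_N (L - L_N) u) of the span of the eigenvectors of L_N with eigenvalues in the
  \<delta>-disc. By Bessel's inequality, if every member of an orthonormal system F lies within r of
  the span of an orthonormal system Q, then card F * (1 - r^2) \<le> card Q; once both defects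
  are small, applying this to orthonormal bases of the two spectral subspaces in both directions
  forces their dimensions to agree.
\<close>

lemma cinner_add_left: "cinner (x + y) (z::'a::complex_inner) = cinner x z + cinner y z"
  by (metis cinner_commute cinner_add_right complex_cnj_add)

lemma cinner_scaleC_left: "cinner (a *\<^sub>C x) (y::'a::complex_inner) = cnj a * cinner x y"
  by (metis cinner_commute cinner_scaleC_right complex_cnj_mult complex_cnj_cnj)

lemma cinner_zero_right [simp]: "cinner x (0::'a::complex_inner) = 0"
  using cinner_add_right[of x 0 0] by simp

lemma cinner_zero_left [simp]: "cinner (0::'a::complex_inner) x = 0"
  using cinner_add_left[of 0 0 x] by simp

lemma cinner_diff_right: "cinner x (y - z::'a::complex_inner) = cinner x y - cinner x z"
  using cinner_add_right[of x "y - z" z] by (simp add: eq_diff_eq)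

lemma cinner_sum_right: "cinner x (\<Sum>i\<in>I. f i::'a::complex_inner) = (\<Sum>i\<in>I. cinner x (f i))"
  by (induct I rule: infinite_finite_induct) (simp_all add: cinner_add_right)

lemma cinner_sum_left: "cinner (\<Sum>i\<in>I. f i::'a::complex_inner) x = (\<Sum>i\<in>I. cinner (f i) x)"
  by (induct I rule: infinite_finite_induct) (simp_all add: cinner_add_left)

lemma cinner_self_eq_0 [simp]: "cinner x x = 0 \<longleftrightarrow> (x::'a::complex_inner) = 0"
  by (simp add: cinner_norm)

lemma cinner_eq_0_commute: "cinner x y = 0 \<Longrightarrow> cinner y (x::'a::complex_inner) = 0"
  by (metis cinner_commute complex_cnj_zero)

lemma Re_cinner_self: "Re (cinner x (x::'a::complex_inner)) = (norm x)\<^sup>2"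
  by (simp add: cinner_norm)

lemma norm_scaleC: "norm (a *\<^sub>C x) = cmod a * norm (x::'a::complex_inner)"
proof -
  have "(norm (a *\<^sub>C x))\<^sup>2 = Re (cnj a * a * cinner x x)"
    by (metis Re_cinner_self cinner_scaleC_left cinner_scaleC_right mult.assoc)
  also have "\<dots> = (cmod a * norm x)\<^sup>2"
    by (simp only: cinner_norm mult.commute[of "cnj a" a] complex_norm_square[symmetric]
          of_real_mult[symmetric] Re_complex_of_real power_mult_distrib)
  finally show ?thesis
    by (simp add: power2_eq_iff_nonneg)
qed

lemma pythagoras_cinner:
  assumes "cinner x y = 0"
  shows "(norm (x + y))\<^sup>2 = (norm x)\<^sup>2 + (norm (y::'a::complex_inner))\<^sup>2"
proof -
  have "cinner (x + y) (x + y) = cinner x x + cinner y y"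
    using assms cinner_eq_0_commute[OF assms] by (simp add: cinner_add_left cinner_add_right)
  then show ?thesis
    by (metis Re_cinner_self plus_complex.sel(1))
qed

lemma pythagoras_sum:
  assumes "finite I" and "\<And>i j. i \<in> I \<Longrightarrow> j \<in> I \<Longrightarrow> i \<noteq> j \<Longrightarrow> cinner (f i) (f j) = 0"
  shows "(norm (\<Sum>i\<in>I. f i::'a::complex_inner))\<^sup>2 = (\<Sum>i\<in>I. (norm (f i))\<^sup>2)"
  using assms
proof (induct I rule: finite_induct)
  case (insert a I)
  have "cinner (f a) (\<Sum>i\<in>I. f i) = 0"
    using insert by (auto simp: cinner_sum_right intro!: sum.neutral)
  then show ?case
    using insert pythagoras_cinner[of "f a" "\<Sum>i\<in>I. f i"] by simp
qed simp

section \<open>Orthonormal systems and Bessel's inequality\<close>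

definition orthonormal :: "'a::complex_inner set \<Rightarrow> bool" where
  "orthonormal Q \<longleftrightarrow> (\<forall>x\<in>Q. norm x = 1) \<and> (\<forall>x\<in>Q. \<forall>y\<in>Q. x \<noteq> y \<longrightarrow> cinner x y = 0)"

definition orth_proj :: "'a::complex_inner set \<Rightarrow> 'a \<Rightarrow> 'a" where
  "orth_proj Q x = (\<Sum>q\<in>Q. cinner q x *\<^sub>C q)"

lemma orthonormal_cinner_self: "orthonormal Q \<Longrightarrow> q \<in> Q \<Longrightarrow> cinner q q = 1"
  by (simp add: orthonormal_def cinner_norm)

lemma orthonormal_Un:
  assumes "orthonormal A" "orthonormal B" "\<And>a b. a \<in> A \<Longrightarrow> b \<in> B \<Longrightarrow> cinner a b = 0"
  shows "orthonormal (A \<union> B)" and "A \<inter> B = {}"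
proof -
  show "orthonormal (A \<union> B)"
    using assms cinner_eq_0_commute by (auto simp: orthonormal_def)
  show "A \<inter> B = {}"
    using assms(3) orthonormal_cinner_self[OF assms(1)] by fastforce
qed

lemma span_Un_span: "cvs.span (cvs.span A \<union> cvs.span B) = cvs.span (A \<union> B)"
proof (rule subset_antisym)
  show "cvs.span (cvs.span A \<union> cvs.span B) \<subseteq> cvs.span (A \<union> B)"
    by (metis Un_least cvs.span_minimal cvs.span_mono cvs.subspace_span sup.cobounded1 sup.cobounded2)
  show "cvs.span (A \<union> B) \<subseteq> cvs.span (cvs.span A \<union> cvs.span B)"
    using cvs.span_superset[of A] cvs.span_superset[of B] by (intro cvs.span_mono) blast
qed

lemma cinner_orth_proj:
  assumes "orthonormal Q" "finite Q" "p \<in> Q"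
  shows "cinner p (orth_proj Q x) = cinner p x"
proof -
  have "cinner p (orth_proj Q x) = (\<Sum>q\<in>Q. cinner q x * cinner p q)"
    by (simp add: orth_proj_def cinner_sum_right cinner_scaleC_right)
  also have "\<dots> = cinner p x * cinner p p"
  proof -
    have "cinner p q = 0" if "q \<in> Q - {p}" for q
      using assms(1,3) that unfolding orthonormal_def by auto
    then show ?thesis
      using assms(2,3) by (simp add: sum.remove[of _ p])
  qed
  finally show ?thesis
    using orthonormal_cinner_self[OF assms(1,3)] by simp
qed

lemma orth_proj_in_span: "orth_proj Q x \<in> cvs.span Q"
  unfolding orth_proj_def by (intro cvs.span_sum cvs.span_scale cvs.span_base)

lemma cinner_span_eq_0:
  assumes "finite Q" "y \<in> cvs.span Q" "\<And>q. q \<in> Q \<Longrightarrow> cinner q w = 0"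
  shows "cinner y (w::'a::complex_inner) = 0"
proof -
  obtain u where "y = (\<Sum>q\<in>Q. u q *\<^sub>C q)"
    using assms(1,2) cvs.span_finite by auto
  then show ?thesis
    using assms(3) by (simp add: cinner_sum_left cinner_scaleC_left)
qed

lemma cinner_diff_orth_proj:
  assumes "orthonormal Q" "finite Q" "y \<in> cvs.span Q"
  shows "cinner y (x - orth_proj Q x) = 0"
proof (rule cinner_span_eq_0[OF assms(2,3)])
  fix q assume "q \<in> Q"
  then show "cinner q (x - orth_proj Q x) = 0"
    using cinner_orth_proj[OF assms(1,2)] by (simp add: cinner_diff_right)
qed

lemma norm_diff_orth_proj_square:
  assumes "orthonormal Q" "finite Q"
  shows "(norm (x - orth_proj Q x))\<^sup>2 = (norm x)\<^sup>2 - (\<Sum>q\<in>Q. (cmod (cinner q x))\<^sup>2)"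
proof -
  have "(norm (orth_proj Q x))\<^sup>2 = (\<Sum>q\<in>Q. (cmod (cinner q x))\<^sup>2)"
    unfolding orth_proj_def using assms
    by (subst pythagoras_sum) (auto simp: orthonormal_def cinner_scaleC_left cinner_scaleC_right norm_scaleC)
  moreover have "(norm x)\<^sup>2 = (norm (orth_proj Q x))\<^sup>2 + (norm (x - orth_proj Q x))\<^sup>2"
    using pythagoras_cinner[OF cinner_diff_orth_proj[OF assms orth_proj_in_span[of Q x], of x]] by simp
  ultimately show ?thesis
    by linarith
qed

lemma bessel_inequality:
  assumes "orthonormal Q" "finite Q"
  shows "(\<Sum>q\<in>Q. (cmod (cinner q x))\<^sup>2) \<le> (norm x)\<^sup>2"
  using norm_diff_orth_proj_square[OF assms, of x] zero_le_power2[of "norm (x - orth_proj Q x)"]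
  by linarith

lemma norm_diff_orth_proj_le_infdist:
  assumes "orthonormal Q" "finite Q"
  shows "norm (x - orth_proj Q x) \<le> infdist x (cvs.span Q)"
proof -
  have "norm (x - orth_proj Q x) \<le> dist x y" if "y \<in> cvs.span Q" for y
  proof -
    have "orth_proj Q x - y \<in> cvs.span Q"
      using that orth_proj_in_span cvs.span_diff by blast
    moreover have "x - y = (orth_proj Q x - y) + (x - orth_proj Q x)"
      by simp
    ultimately have "(norm (x - y))\<^sup>2 = (norm (orth_proj Q x - y))\<^sup>2 + (norm (x - orth_proj Q x))\<^sup>2"
      using pythagoras_cinner[OF cinner_diff_orth_proj[OF assms]] by metis
    then show ?thesis
      by (simp add: dist_norm power2_le_imp_le)
  qed
  moreover have "cvs.span Q \<noteq> {}"
    using cvs.span_zero by blast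
  ultimately show ?thesis
    by (simp add: infdist_notempty cINF_greatest)
qed

lemma card_orthonormal_near_span:
  assumes Q: "orthonormal Q" "finite Q" and F: "orthonormal F" "finite F"
    and near: "\<And>f. f \<in> F \<Longrightarrow> infdist f (cvs.span Q) \<le> r"
  shows "real (card F) * (1 - r\<^sup>2) \<le> real (card Q)"
proof -
  have "real (card F) * (1 - r\<^sup>2) = (\<Sum>f\<in>F. 1 - r\<^sup>2)"
    by simp
  also have "\<dots> \<le> (\<Sum>f\<in>F. \<Sum>q\<in>Q. (cmod (cinner q f))\<^sup>2)"
  proof (rule sum_mono)
    fix f assume f: "f \<in> F"
    have "(norm (f - orth_proj Q f))\<^sup>2 \<le> r\<^sup>2"
      using norm_diff_orth_proj_le_infdist[OF Q, of f] near[OF f] by (simp add: power_mono)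
    then show "1 - r\<^sup>2 \<le> (\<Sum>q\<in>Q. (cmod (cinner q f))\<^sup>2)"
      using norm_diff_orth_proj_square[OF Q, of f] f F(1) by (simp add: orthonormal_def)
  qed
  also have "\<dots> = (\<Sum>q\<in>Q. \<Sum>f\<in>F. (cmod (cinner f q))\<^sup>2)"
    by (subst sum.swap) (metis (no_types, lifting) cinner_commute complex_mod_cnj sum.cong)
  also have "\<dots> \<le> (\<Sum>q\<in>Q. 1)"
  proof (rule sum_mono)
    fix q assume "q \<in> Q"
    then show "(\<Sum>f\<in>F. (cmod (cinner f q))\<^sup>2) \<le> 1"
      using bessel_inequality[OF F, of q] Q(1) by (simp add: orthonormal_def)
  qed
  finally show ?thesis
    by simp
qed

lemma finite_card_le_orthonormal_near_span:
  assumes Q: "orthonormal Q" "finite Q" and r: "(real (card Q) + 1) * r\<^sup>2 < 1"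
    and F: "orthonormal F" and near: "\<And>f. f \<in> F \<Longrightarrow> infdist f (cvs.span Q) \<le> r"
  shows "finite F \<and> card F \<le> card Q"
proof (rule finite_if_finite_subsets_card_bdd)
  fix G assume G: "G \<subseteq> F" "finite G"
  have "orthonormal G"
    using F G(1) by (auto simp: orthonormal_def)
  then have bound: "real (card G) * (1 - r\<^sup>2) \<le> real (card Q)"
    using card_orthonormal_near_span[OF Q _ G(2)] near G(1) by blast
  show "card G \<le> card Q"
  proof (rule ccontr)
    assume "\<not> card G \<le> card Q"
    then have "real (card Q) + 1 \<le> real (card G)"
      by simp
    moreover have "1 * r\<^sup>2 \<le> (real (card Q) + 1) * r\<^sup>2"
      by (rule mult_right_mono) simp_all
    ultimately have "(real (card Q) + 1) * (1 - r\<^sup>2) \<le> real (card G) * (1 - r\<^sup>2)"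
      using r by (intro mult_right_mono) simp_all
    then have "(real (card Q) + 1) * (1 - r\<^sup>2) \<le> real (card Q)"
      using bound by linarith
    then show False
      using r by (simp add: algebra_simps)
  qed
qed

lemma orthonormal_independent:
  assumes "orthonormal Q" "finite Q"
  shows "cvs.independent Q"
proof
  assume "cvs.dependent Q"
  then obtain a where a: "a \<in> Q" "a \<in> cvs.span (Q - {a})"
    by (auto simp: cvs.dependent_def)
  have "cinner a a = 0"
    by (rule cinner_span_eq_0[of "Q - {a}"]) (use assms a in \<open>auto simp: orthonormal_def\<close>)
  then show False
    using orthonormal_cinner_self[OF assms(1) a(1)] by simp
qed

lemma gram_schmidt_step:
  assumes Q: "orthonormal Q" "finite Q" and b: "b \<notin> cvs.span Q"
  obtains q where "orthonormal (insert q Q)" "cvs.span (insert q Q) = cvs.span (insert b Q)"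
proof -
  define b' where "b' = b - orth_proj Q b"
  have "b \<noteq> orth_proj Q b"
    using b orth_proj_in_span[of Q b] by metis
  then have "norm b' \<noteq> 0"
    by (simp add: b'_def)
  define q where "q = complex_of_real (1 / norm b') *\<^sub>C b'"
  have norm_q: "norm q = 1"
    using \<open>norm b' \<noteq> 0\<close> by (simp add: q_def norm_scaleC norm_divide)
  have orth: "cinner p q = 0" if "p \<in> Q" for p
    using cinner_orth_proj[OF Q that, of b]
    by (simp add: q_def b'_def cinner_scaleC_right cinner_diff_right)
  have "orthonormal (insert q Q)"
    using Q(1) norm_q orth cinner_eq_0_commute[OF orth] by (auto simp: orthonormal_def)
  moreover have "cvs.span (insert q Q) = cvs.span (insert b Q)"
  proof -
    have sQ: "cvs.span Q \<subseteq> cvs.span (insert c Q)" for c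
      by (simp add: cvs.span_mono subset_insertI)
    have "b \<in> cvs.span (insert b Q)" "orth_proj Q b \<in> cvs.span (insert b Q)"
      using sQ orth_proj_in_span by (auto simp: cvs.span_base)
    then have "q \<in> cvs.span (insert b Q)"
      unfolding q_def b'_def by (intro cvs.span_scale cvs.span_diff)
    moreover have "b = complex_of_real (norm b') *\<^sub>C q + orth_proj Q b"
      using \<open>norm b' \<noteq> 0\<close> by (simp add: q_def b'_def cvs.scale_scale scaleC_of_real)
    moreover have "complex_of_real (norm b') *\<^sub>C q \<in> cvs.span (insert q Q)"
      by (simp add: cvs.span_base cvs.span_scale)
    moreover have "orth_proj Q b \<in> cvs.span (insert q Q)"
      using sQ orth_proj_in_span by blast
    ultimately have "b \<in> cvs.span (insert q Q)"
      by (metis cvs.span_add)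
    have "insert q Q \<subseteq> cvs.span (insert b Q)" "insert b Q \<subseteq> cvs.span (insert q Q)"
      using \<open>q \<in> cvs.span (insert b Q)\<close> \<open>b \<in> cvs.span (insert q Q)\<close> sQ cvs.span_superset[of Q]
      by blast+
    then show ?thesis
      by (simp only: cvs.span_eq)
  qed
  ultimately show thesis
    using that by blast
qed

lemma orthonormal_basis_exists:
  fixes B :: "'a::complex_inner set"
  assumes "finite B"
  shows "\<exists>Q. finite Q \<and> orthonormal Q \<and> cvs.span Q = cvs.span B"
  using assms
proof (induct B rule: finite_induct)
  case empty
  then show ?case
    by (intro exI[of _ "{}"]) (auto simp: orthonormal_def)
next
  case (insert b B)
  then obtain Q where Q: "finite Q" "orthonormal Q" "cvs.span Q = cvs.span B"
    by blast
  then have span_insert: "cvs.span (insert b Q) = cvs.span (insert b B)"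
    by (simp add: cvs.span_insert)
  show ?case
  proof (cases "b \<in> cvs.span Q")
    case True
    then show ?thesis
      using Q by (intro exI[of _ Q]) (simp add: cvs.span_redundant)
  next
    case False
    then obtain q where "orthonormal (insert q Q)" "cvs.span (insert q Q) = cvs.span (insert b Q)"
      using gram_schmidt_step[OF Q(2,1)] by blast
    then show ?thesis
      using Q(1) span_insert by (intro exI[of _ "insert q Q"]) simp
  qed
qed

lemma orthonormal_basis_of_independent:
  fixes B :: "'a::complex_inner set"
  assumes "finite B" "cvs.independent B"
  obtains Q where "finite Q" "orthonormal Q" "cvs.span Q = cvs.span B" "card Q = card B"
proof -
  obtain Q where Q: "finite Q" "orthonormal Q" "cvs.span Q = cvs.span B"
    using orthonormal_basis_exists[OF assms(1)] by blast
  have "card Q = card B"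
    using cvs.dim_span_eq_card_independent[OF orthonormal_independent[OF Q(2,1)]]
      cvs.dim_span_eq_card_independent[OF assms(2)] Q(3) by simp
  then show ?thesis
    using Q that by blast
qed

lemma clinear_module_hom: "clinear f \<Longrightarrow> module_hom scaleC scaleC f"
  unfolding clinear_def module_hom_iff by (simp add: cvs.module_axioms)

lemma clinear_zero: "clinear f \<Longrightarrow> f 0 = 0"
  using module_hom.zero[OF clinear_module_hom] by blast

lemma clinear_add: "clinear f \<Longrightarrow> f (x + y) = f x + f y"
  by (simp add: clinear_def)

lemma clinear_scale: "clinear f \<Longrightarrow> f (a *\<^sub>C x) = a *\<^sub>C f x"
  by (simp add: clinear_def)

lemma clinear_diff: "clinear f \<Longrightarrow> f (x - y) = f x - f y"
  using module_hom.diff[OF clinear_module_hom] by blast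

lemma clinear_sum: "clinear f \<Longrightarrow> f (sum g A) = (\<Sum>x\<in>A. f (g x))"
  using module_hom.sum[OF clinear_module_hom] by blast

lemma bounded_linear_if_bounded_clinear:
  assumes "bounded_clinear f"
  shows "bounded_linear f"
proof -
  obtain K where "clinear f" "\<And>x. norm (f x) \<le> norm x * K"
    using assms unfolding bounded_clinear_def by blast
  then show ?thesis
    by (intro bounded_linear_intro[where K = K]) (simp_all add: clinear_add clinear_scale flip: scaleC_of_real)
qed

lemma bounded_linear_scaleC: "bounded_linear (\<lambda>x::'a::complex_inner. a *\<^sub>C x)"
  by (intro bounded_linear_intro[where K = "cmod a"])
    (simp_all add: scaleC_add_right scaleC_scaleC norm_scaleC mult.commute flip: scaleC_of_real)

lemma eigenspace_subspace:
  assumes "clinear \<iota>" "clinear T"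
  shows "cvs.subspace (eigenspace \<iota> T \<mu>)"
  unfolding cvs.subspace_def eigenspace_def using assms
  by (auto simp: clinear_zero clinear_add clinear_scale cvs.scale_right_distrib cvs.scale_left_commute)

definition symmetric_op :: "('v::complex_inner \<Rightarrow> 'w::complex_inner) \<Rightarrow> ('v \<Rightarrow> 'w) \<Rightarrow> bool" where
  "symmetric_op \<iota> T \<longleftrightarrow> (\<forall>x y. cinner (T x) (\<iota> y) = cinner (\<iota> x) (T y))"

lemma self_adjoint_on_imp_symmetric_op: "self_adjoint_on \<iota> T \<Longrightarrow> symmetric_op \<iota> T"
  by (simp add: self_adjoint_on_def symmetric_op_def)

lemma cinner_eigenvectors_eq_0:
  assumes "symmetric_op \<iota> T" "e \<in> eigenspace \<iota> T \<nu>" "e' \<in> eigenspace \<iota> T \<nu>'" "\<nu> \<noteq> \<nu>'"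
  shows "cinner (\<iota> e) (\<iota> e') = 0"
proof -
  have sym: "cinner (T x) (\<iota> y) = cinner (\<iota> x) (T y)" for x y
    using assms(1) by (simp add: symmetric_op_def)
  have "cnj \<nu> * cinner (\<iota> e) (\<iota> e') = \<nu>' * cinner (\<iota> e) (\<iota> e')"
    using sym[of e e'] assms(2,3) by (simp add: eigenspace_def cinner_scaleC_left cinner_scaleC_right)
  moreover have "cnj \<nu> * cinner (\<iota> e) (\<iota> e) = \<nu> * cinner (\<iota> e) (\<iota> e)"
    using sym[of e e] assms(2) by (simp add: eigenspace_def cinner_scaleC_left cinner_scaleC_right)
  ultimately show ?thesis
    using assms(4) by (cases "\<iota> e = 0") auto
qed

lemma unit_eigenvector_exists:
  assumes "clinear \<iota>" "inj \<iota>" "clinear T" "is_eigenvalue \<iota> T \<mu>"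
  obtains v where "v \<in> eigenspace \<iota> T \<mu>" "norm (\<iota> v) = 1"
proof -
  obtain e where e: "e \<noteq> 0" "e \<in> eigenspace \<iota> T \<mu>"
    using assms(4) by (auto simp: is_eigenvalue_def)
  have "\<iota> e \<noteq> 0"
    using e(1) assms(2) clinear_zero[OF assms(1)] by (metis injD)
  let ?v = "complex_of_real (1 / norm (\<iota> e)) *\<^sub>C e"
  have "?v \<in> eigenspace \<iota> T \<mu>"
    using e(2) cvs.subspace_scale[OF eigenspace_subspace[OF assms(1,3)]] by blast
  moreover have "norm (\<iota> ?v) = 1"
    using \<open>\<iota> e \<noteq> 0\<close> by (simp add: clinear_scale[OF assms(1)] norm_scaleC norm_divide)
  ultimately show thesis
    using that by blast
qed

lemma orthonormal_basis_image:
  fixes \<iota> :: "'v::complex_inner \<Rightarrow> 'w::complex_inner"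
  assumes "clinear \<iota>" "inj \<iota>" "finite B" "cvs.independent B"
  obtains Q where "finite Q" "orthonormal Q" "cvs.span Q = \<iota> ` cvs.span B" "card Q = card B"
proof -
  have hom: "module_hom scaleC scaleC \<iota>"
    by (rule clinear_module_hom[OF assms(1)])
  have "cvs.independent (\<iota> ` B)"
    using module_hom.independent_inj_image[OF hom assms(4,2)] .
  moreover have "card (\<iota> ` B) = card B"
    using assms(2) by (simp add: card_image inj_on_subset)
  ultimately show thesis
    using orthonormal_basis_of_independent[OF finite_imageI[OF assms(3)]] that
      module_hom.span_image[OF hom, of B] by metis
qed

lemma orthonormal_basis_eigenspace:
  fixes \<iota> :: "'v::complex_inner \<Rightarrow> 'w::complex_inner"
  assumes "clinear \<iota>" "inj \<iota>" "clinear T" "finite_geom_mult \<iota> T \<mu>"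
  obtains Q where "finite Q" "orthonormal Q" "cvs.span Q = \<iota> ` eigenspace \<iota> T \<mu>"
    "card Q = geom_mult \<iota> T \<mu>"
proof -
  let ?E = "eigenspace \<iota> T \<mu>"
  obtain B0 where B0: "finite B0" "cvs.span B0 = ?E"
    using assms(4) by (auto simp: finite_geom_mult_def)
  obtain B where B: "B \<subseteq> ?E" "cvs.independent B" "?E \<subseteq> cvs.span B" "card B = cvs.dim ?E"
    using cvs.basis_exists by blast
  have "finite B"
    using cvs.independent_span_bound[OF B0(1) B(2)] B(1) B0(2) by auto
  moreover have "cvs.span B = ?E"
    using B(1,3) cvs.span_minimal[OF B(1) eigenspace_subspace[OF assms(1,3)]] by auto
  ultimately show thesis
    using orthonormal_basis_image[OF assms(1,2) _ B(2)] B(4) that by (metis geom_mult_def)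
qed

lemma finite_geom_mult_if_orthonormal_card_bounded:
  fixes \<iota> :: "'v::complex_inner \<Rightarrow> 'w::complex_inner"
  assumes "clinear \<iota>" "inj \<iota>" "clinear T"
    and bound: "\<And>Q. finite Q \<Longrightarrow> orthonormal Q \<Longrightarrow> Q \<subseteq> \<iota> ` eigenspace \<iota> T \<mu> \<Longrightarrow> card Q \<le> m"
  shows "finite_geom_mult \<iota> T \<mu>"
proof -
  let ?E = "eigenspace \<iota> T \<mu>"
  obtain B where B: "B \<subseteq> ?E" "cvs.independent B" "?E \<subseteq> cvs.span B"
    using cvs.maximal_independent_subset by blast
  have span_sub: "cvs.span B' \<subseteq> ?E" if "B' \<subseteq> B" for B'
    using cvs.span_minimal[OF _ eigenspace_subspace[OF assms(1,3)]] B(1) that by blast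
  have "card B' \<le> m" if B': "B' \<subseteq> B" "finite B'" for B'
  proof -
    obtain Q where "finite Q" "orthonormal Q" "cvs.span Q = \<iota> ` cvs.span B'" "card Q = card B'"
      using orthonormal_basis_image[OF assms(1,2) B'(2) cvs.independent_mono[OF B(2) B'(1)]] .
    moreover from this have "Q \<subseteq> \<iota> ` ?E"
      using cvs.span_superset[of Q] span_sub[OF B'(1)] by blast
    ultimately show ?thesis
      using bound by metis
  qed
  then have "finite B"
    using finite_if_finite_subsets_card_bdd by blast
  moreover have "cvs.span B = ?E"
    using B(3) span_sub[of B] by auto
  ultimately show ?thesis
    using B(1) by (auto simp: finite_geom_mult_def)
qed

definition eigen_span :: "('v::complex_inner \<Rightarrow> 'w::complex_inner) \<Rightarrow> ('v \<Rightarrow> 'w) \<Rightarrow> complex set \<Rightarrow> 'w set" where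
  "eigen_span \<iota> T K = cvs.span (\<iota> ` (\<Union>\<mu>\<in>K. eigenspace \<iota> T \<mu>))"

lemma eigen_span_singleton:
  assumes "clinear \<iota>" "clinear T"
  shows "eigen_span \<iota> T {\<mu>} = \<iota> ` eigenspace \<iota> T \<mu>"
  using module_hom.span_image[OF clinear_module_hom[OF assms(1)]] eigenspace_subspace[OF assms]
  by (simp add: eigen_span_def cvs.span_eq_iff[THEN iffD2])

lemma eigen_span_eigenvalues:
  assumes "clinear \<iota>" "clinear T"
  shows "eigen_span \<iota> T {\<mu>. is_eigenvalue \<iota> T \<mu> \<and> \<mu> \<in> K} = eigen_span \<iota> T K"
proof -
  let ?A = "\<iota> ` (\<Union>\<mu>\<in>{\<mu>. is_eigenvalue \<iota> T \<mu> \<and> \<mu> \<in> K}. eigenspace \<iota> T \<mu>)"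
  let ?B = "\<iota> ` (\<Union>\<mu>\<in>K. eigenspace \<iota> T \<mu>)"
  have "?B \<subseteq> insert 0 ?A"
  proof
    fix w assume "w \<in> ?B"
    then obtain \<mu> e where "\<mu> \<in> K" "e \<in> eigenspace \<iota> T \<mu>" "w = \<iota> e"
      by blast
    then show "w \<in> insert 0 ?A"
      using clinear_zero[OF assms(1)] by (cases "e = 0") (auto simp: is_eigenvalue_def)
  qed
  then have "cvs.span ?B \<subseteq> cvs.span ?A"
    using cvs.span_mono by (metis cvs.span_insert_0)
  moreover have "cvs.span ?A \<subseteq> cvs.span ?B"
    by (intro cvs.span_mono) blast
  ultimately show ?thesis
    unfolding eigen_span_def by blast
qed

lemma orthonormal_basis_eigen_span:
  fixes \<iota> :: "'v::complex_inner \<Rightarrow> 'w::complex_inner"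
  assumes cl: "clinear \<iota>" "inj \<iota>" "clinear T" and sym: "symmetric_op \<iota> T"
    and "finite S" and "\<And>\<mu>. \<mu> \<in> S \<Longrightarrow> finite_geom_mult \<iota> T \<mu>"
  shows "\<exists>U. finite U \<and> orthonormal U \<and> U \<subseteq> \<iota> ` (\<Union>\<mu>\<in>S. eigenspace \<iota> T \<mu>) \<and>
             card U = (\<Sum>\<mu>\<in>S. geom_mult \<iota> T \<mu>) \<and> cvs.span U = eigen_span \<iota> T S"
  using assms(5,6)
proof (induction S rule: finite_induct)
  case empty
  then show ?case
    by (intro exI[of _ "{}"]) (auto simp: orthonormal_def eigen_span_def)
next
  case (insert \<mu> S)
  then obtain U where U: "finite U" "orthonormal U" "U \<subseteq> \<iota> ` (\<Union>\<nu>\<in>S. eigenspace \<iota> T \<nu>)"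
      "card U = (\<Sum>\<nu>\<in>S. geom_mult \<iota> T \<nu>)" "cvs.span U = eigen_span \<iota> T S"
    by auto
  obtain Q where Q: "finite Q" "orthonormal Q" "cvs.span Q = \<iota> ` eigenspace \<iota> T \<mu>"
      "card Q = geom_mult \<iota> T \<mu>"
    using orthonormal_basis_eigenspace[OF cl insert.prems] by blast
  have Q_sub: "Q \<subseteq> \<iota> ` eigenspace \<iota> T \<mu>"
    using Q(3) cvs.span_superset by blast
  have orth: "cinner q u = 0" if qu: "q \<in> Q" "u \<in> U" for q u
  proof -
    obtain e where "e \<in> eigenspace \<iota> T \<mu>" "q = \<iota> e"
      using qu(1) Q_sub by blast
    moreover obtain \<nu> e' where "\<nu> \<in> S" "e' \<in> eigenspace \<iota> T \<nu>" "u = \<iota> e'"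
      using qu(2) U(3) by blast
    ultimately show ?thesis
      using cinner_eigenvectors_eq_0[OF sym] insert.hyps(2) by blast
  qed
  have "cvs.span (\<iota> ` eigenspace \<iota> T \<mu>) = cvs.span Q"
    using Q(3) cvs.span_span by metis
  have "cvs.span (Q \<union> U) = cvs.span (cvs.span Q \<union> cvs.span U)"
    by (rule span_Un_span[symmetric])
  also have "\<dots> = cvs.span (cvs.span (\<iota> ` eigenspace \<iota> T \<mu>) \<union>
      cvs.span (\<iota> ` (\<Union>\<nu>\<in>S. eigenspace \<iota> T \<nu>)))"
    using \<open>cvs.span (\<iota> ` eigenspace \<iota> T \<mu>) = cvs.span Q\<close> U(5) by (simp only: eigen_span_def)
  also have "\<dots> = eigen_span \<iota> T (insert \<mu> S)"
    by (simp add: span_Un_span eigen_span_def image_Un)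
  finally have "cvs.span (Q \<union> U) = eigen_span \<iota> T (insert \<mu> S)" .
  moreover have "Q \<union> U \<subseteq> \<iota> ` (\<Union>\<nu>\<in>insert \<mu> S. eigenspace \<iota> T \<nu>)"
    using Q_sub U(3) by (simp add: image_Un le_supI1 le_supI2)
  ultimately show ?case
    using Q(1,4) U(1,4) orthonormal_Un[OF Q(2) U(2) orth] insert.hyps
      card_Un_disjoint[OF Q(1) U(1) orthonormal_Un(2)[OF Q(2) U(2) orth]]
    by (intro exI[of _ "Q \<union> U"]) simp
qed

lemma eigenvalue_in_cspectrum:
  assumes "clinear \<iota>" "clinear T" "e \<in> eigenspace \<iota> T \<nu>" "e \<noteq> 0"
  shows "\<nu> \<in> cspectrum \<iota> T"
proof -
  have "\<nu> *\<^sub>C \<iota> e - T e = \<nu> *\<^sub>C \<iota> 0 - T 0"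
    using assms by (simp add: eigenspace_def clinear_zero)
  then have "\<not> inj (\<lambda>v. \<nu> *\<^sub>C \<iota> v - T v)"
    using assms(4) by (metis (mono_tags, lifting) injD)
  then show ?thesis
    by (auto simp: cspectrum_def resolvent_ok_def bij_is_inj)
qed

lemma resolvent_eq: "resolvent \<iota> T z = \<iota> \<circ> inv (\<lambda>v. z *\<^sub>C \<iota> v - T v)"
  by (simp add: resolvent_def fun_eq_iff)

lemma bounded_linear_resolvent: "resolvent_ok \<iota> T z \<Longrightarrow> bounded_linear (resolvent \<iota> T z)"
  by (simp add: resolvent_ok_def resolvent_eq bounded_linear_if_bounded_clinear)

lemma clinear_resolvent: "resolvent_ok \<iota> T z \<Longrightarrow> clinear (resolvent \<iota> T z)"
  by (simp add: resolvent_ok_def resolvent_eq bounded_clinear_def)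

lemma resolvent_apply:
  assumes "resolvent_ok \<iota> T z"
  shows "resolvent \<iota> T z (z *\<^sub>C \<iota> v - T v) = \<iota> v"
proof -
  have "bij (\<lambda>v. z *\<^sub>C \<iota> v - T v)"
    using assms by (simp add: resolvent_ok_def)
  then show ?thesis
    using inv_f_f[OF bij_is_inj[OF \<open>bij _\<close>]] by (simp add: resolvent_def)
qed

lemma resolvent_eigenvector:
  assumes "clinear \<iota>" "clinear T" "resolvent_ok \<iota> T z" "e \<in> eigenspace \<iota> T \<nu>"
  shows "resolvent \<iota> T z (\<iota> e) = (1 / (z - \<nu>)) *\<^sub>C \<iota> e"
proof (cases "e = 0")
  case True
  then show ?thesis
    using assms clinear_resolvent[OF assms(3)] by (simp add: clinear_zero)
next
  case False
  then have "z \<noteq> \<nu>"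
    using eigenvalue_in_cspectrum[OF assms(1,2,4)] assms(3) by (auto simp: cspectrum_def)
  let ?e = "(1 / (z - \<nu>)) *\<^sub>C e"
  have "z / (z - \<nu>) - \<nu> / (z - \<nu>) = 1"
    using \<open>z \<noteq> \<nu>\<close> by (simp add: diff_divide_distrib[symmetric])
  then have "z *\<^sub>C \<iota> ?e - T ?e = \<iota> e"
    using assms(4) \<open>z \<noteq> \<nu>\<close>
    by (simp add: eigenspace_def clinear_scale[OF assms(1)] clinear_scale[OF assms(2)]
        cvs.scale_left_commute[of _ \<nu>] cvs.scale_left_diff_distrib[symmetric])
  then show ?thesis
    using resolvent_apply[OF assms(3), of ?e] by (simp add: clinear_scale[OF assms(1)])
qed

lemma resolvent_defect:
  assumes "resolvent_ok \<iota> T z"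
  shows "(z - \<mu>) *\<^sub>C resolvent \<iota> T z (\<iota> v) - \<iota> v = resolvent \<iota> T z (T v - \<mu> *\<^sub>C \<iota> v)"
proof -
  have R: "clinear (resolvent \<iota> T z)"
    by (rule clinear_resolvent[OF assms])
  have "(z - \<mu>) *\<^sub>C resolvent \<iota> T z (\<iota> v) - \<iota> v =
      resolvent \<iota> T z ((z - \<mu>) *\<^sub>C \<iota> v) - resolvent \<iota> T z (z *\<^sub>C \<iota> v - T v)"
    by (simp only: clinear_scale[OF R] resolvent_apply[OF assms])
  also have "\<dots> = resolvent \<iota> T z ((z - \<mu>) *\<^sub>C \<iota> v - (z *\<^sub>C \<iota> v - T v))"
    by (rule clinear_diff[OF R, symmetric])
  also have "(z - \<mu>) *\<^sub>C \<iota> v - (z *\<^sub>C \<iota> v - T v) = T v - \<mu> *\<^sub>C \<iota> v"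
    by (simp add: cvs.scale_left_diff_distrib algebra_simps)
  finally show ?thesis .
qed

lemma resolvent_defect_eigenvector:
  assumes "clinear \<iota>" "clinear T" "resolvent_ok \<iota> T z" "e \<in> eigenspace \<iota> T \<nu>"
  shows "(z - \<mu>) *\<^sub>C resolvent \<iota> T z (\<iota> e) - \<iota> e = ((\<nu> - \<mu>) / (z - \<nu>)) *\<^sub>C \<iota> e"
proof -
  have "T e - \<mu> *\<^sub>C \<iota> e = (\<nu> - \<mu>) *\<^sub>C \<iota> e"
    using assms(4) by (simp add: eigenspace_def cvs.scale_left_diff_distrib)
  then have "(z - \<mu>) *\<^sub>C resolvent \<iota> T z (\<iota> e) - \<iota> e = resolvent \<iota> T z ((\<nu> - \<mu>) *\<^sub>C \<iota> e)"
    by (simp only: resolvent_defect[OF assms(3)])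
  then show ?thesis
    by (simp add: clinear_scale[OF clinear_resolvent[OF assms(3)]] resolvent_eigenvector[OF assms]
        cvs.scale_scale)
qed

section \<open>Distance to spans of eigenvectors\<close>

lemma eigen_span_sum_eigenvectors:
  assumes "clinear \<iota>" "clinear T" "x \<in> eigen_span \<iota> T K"
  shows "\<exists>S g. finite S \<and> S \<subseteq> K \<and> (\<forall>\<nu>. g \<nu> \<in> eigenspace \<iota> T \<nu>) \<and> x = (\<Sum>\<nu>\<in>S. \<iota> (g \<nu>))"
  using assms(3) unfolding eigen_span_def
proof (induct rule: cvs.span_induct_alt)
  case base
  show ?case
    by (intro exI[of _ "{}"] exI[of _ "\<lambda>_. 0"])
      (simp add: cvs.subspace_0[OF eigenspace_subspace[OF assms(1,2)]])
next
  case (step c x y)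
  then obtain e \<mu> where x: "\<mu> \<in> K" "e \<in> eigenspace \<iota> T \<mu>" "x = \<iota> e"
    by blast
  from step obtain S g where S: "finite S" "S \<subseteq> K" "\<forall>\<nu>. g \<nu> \<in> eigenspace \<iota> T \<nu>"
      "y = (\<Sum>\<nu>\<in>S. \<iota> (g \<nu>))"
    by blast
  have sub: "cvs.subspace (eigenspace \<iota> T \<nu>)" for \<nu>
    by (rule eigenspace_subspace[OF assms(1,2)])
  define g' where "g' = g(\<mu> := c *\<^sub>C e + (if \<mu> \<in> S then g \<mu> else 0))"
  have g': "\<forall>\<nu>. g' \<nu> \<in> eigenspace \<iota> T \<nu>"
    using S(3) x(2) sub by (auto simp: g'_def cvs.subspace_add cvs.subspace_scale cvs.subspace_0)
  have "(\<Sum>\<nu>\<in>insert \<mu> S. \<iota> (g' \<nu>)) = \<iota> (g' \<mu>) + (\<Sum>\<nu>\<in>S - {\<mu>}. \<iota> (g' \<nu>))"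
    using S(1) by (simp add: sum.insert_remove)
  also have "(\<Sum>\<nu>\<in>S - {\<mu>}. \<iota> (g' \<nu>)) = (\<Sum>\<nu>\<in>S - {\<mu>}. \<iota> (g \<nu>))"
    by (rule sum.cong) (auto simp: g'_def)
  also have "\<iota> (g' \<mu>) = c *\<^sub>C \<iota> e + (if \<mu> \<in> S then \<iota> (g \<mu>) else 0)"
    by (simp add: g'_def clinear_add[OF assms(1)] clinear_scale[OF assms(1)] clinear_zero[OF assms(1)])
  also have "y = (if \<mu> \<in> S then \<iota> (g \<mu>) else 0) + (\<Sum>\<nu>\<in>S - {\<mu>}. \<iota> (g \<nu>))"
    using S(1,4) by (simp add: sum.remove)
  ultimately have "(\<Sum>\<nu>\<in>insert \<mu> S. \<iota> (g' \<nu>)) = c *\<^sub>C x + y"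
    using x(3) by (simp add: algebra_simps)
  then show ?case
    using g' S(1,2) x(1) by (intro exI[of _ "insert \<mu> S"] exI[of _ g']) auto
qed

lemma norm_sum_eigenvectors_square:
  assumes "symmetric_op \<iota> T" "finite S" "\<And>\<nu>. g \<nu> \<in> eigenspace \<iota> T \<nu>"
  shows "(norm (\<Sum>\<nu>\<in>S. a \<nu> *\<^sub>C \<iota> (g \<nu>)))\<^sup>2 = (\<Sum>\<nu>\<in>S. (cmod (a \<nu>) * norm (\<iota> (g \<nu>)))\<^sup>2)"
proof -
  have "(norm (\<Sum>\<nu>\<in>S. a \<nu> *\<^sub>C \<iota> (g \<nu>)))\<^sup>2 = (\<Sum>\<nu>\<in>S. (norm (a \<nu> *\<^sub>C \<iota> (g \<nu>)))\<^sup>2)"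
    by (rule pythagoras_sum[OF assms(2)])
      (simp add: cinner_scaleC_left cinner_scaleC_right cinner_eigenvectors_eq_0[OF assms(1) assms(3) assms(3)])
  then show ?thesis
    by (simp add: norm_scaleC)
qed

lemma infdist_eigen_span_le_sum:
  fixes \<iota> :: "'v::complex_inner \<Rightarrow> 'w::complex_inner"
  assumes cl: "clinear \<iota>" "clinear T" and sym: "symmetric_op \<iota> T" and rok: "resolvent_ok \<iota> T z"
    and "c \<ge> 0"
    and sep: "\<And>\<nu> e. e \<in> eigenspace \<iota> T \<nu> \<Longrightarrow> e \<noteq> 0 \<Longrightarrow> \<nu> \<notin> K \<Longrightarrow> c * cmod (z - \<nu>) \<le> cmod (\<nu> - \<mu>)"
    and S: "finite S" and g: "\<And>\<nu>. g \<nu> \<in> eigenspace \<iota> T \<nu>"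
    and x: "x = (\<Sum>\<nu>\<in>S. \<iota> (g \<nu>))"
  shows "c * infdist x (eigen_span \<iota> T K) \<le> norm ((z - \<mu>) *\<^sub>C resolvent \<iota> T z x - x)"
proof -
  define a where "a \<nu> = (\<nu> - \<mu>) / (z - \<nu>)" for \<nu>
  have "(z - \<mu>) *\<^sub>C resolvent \<iota> T z x - x = (\<Sum>\<nu>\<in>S. (z - \<mu>) *\<^sub>C resolvent \<iota> T z (\<iota> (g \<nu>)) - \<iota> (g \<nu>))"
    unfolding x clinear_sum[OF clinear_resolvent[OF rok]] by (simp add: cvs.scale_sum_right sum_subtractf)
  also have "\<dots> = (\<Sum>\<nu>\<in>S. a \<nu> *\<^sub>C \<iota> (g \<nu>))"
    unfolding a_def resolvent_defect_eigenvector[OF cl rok g] ..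
  finally have Ax: "(z - \<mu>) *\<^sub>C resolvent \<iota> T z x - x = (\<Sum>\<nu>\<in>S. a \<nu> *\<^sub>C \<iota> (g \<nu>))" .
  define y where "y = (\<Sum>\<nu>\<in>S \<inter> K. \<iota> (g \<nu>))"
  have "y \<in> eigen_span \<iota> T K"
    unfolding y_def eigen_span_def using g by (intro cvs.span_sum cvs.span_base) blast
  then have "infdist x (eigen_span \<iota> T K) \<le> norm (x - y)"
    by (metis dist_norm infdist_le)
  have "x - y = (\<Sum>\<nu>\<in>S - K. \<iota> (g \<nu>))"
    unfolding x y_def using sum.Int_Diff[OF S, of _ K] by (simp add: algebra_simps)
  then have norm_xy: "(norm (x - y))\<^sup>2 = (\<Sum>\<nu>\<in>S - K. (norm (\<iota> (g \<nu>)))\<^sup>2)"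
    using norm_sum_eigenvectors_square[OF sym finite_Diff[OF S] g, of "\<lambda>_. 1"] by simp
  have a_ge: "c * norm (\<iota> (g \<nu>)) \<le> cmod (a \<nu>) * norm (\<iota> (g \<nu>))" if "\<nu> \<notin> K" for \<nu>
  proof (cases "g \<nu> = 0")
    case True
    then show ?thesis
      by (simp add: clinear_zero[OF cl(1)])
  next
    case False
    then have "z \<noteq> \<nu>"
      using eigenvalue_in_cspectrum[OF cl g] rok by (auto simp: cspectrum_def)
    then have "c \<le> cmod (a \<nu>)"
      using sep[OF g False that] by (simp add: a_def norm_divide pos_le_divide_eq)
    then show ?thesis
      by (simp add: mult_right_mono)
  qed
  have "(c * infdist x (eigen_span \<iota> T K))\<^sup>2 \<le> (c * norm (x - y))\<^sup>2"
    using \<open>infdist x _ \<le> _\<close> \<open>c \<ge> 0\<close> by (intro power_mono mult_left_mono) (simp_all add: infdist_nonneg)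
  also have "\<dots> = (\<Sum>\<nu>\<in>S - K. (c * norm (\<iota> (g \<nu>)))\<^sup>2)"
    by (simp add: power_mult_distrib norm_xy sum_distrib_left)
  also have "\<dots> \<le> (\<Sum>\<nu>\<in>S - K. (cmod (a \<nu>) * norm (\<iota> (g \<nu>)))\<^sup>2)"
    using a_ge \<open>c \<ge> 0\<close> by (intro sum_mono power_mono) auto
  also have "\<dots> \<le> (\<Sum>\<nu>\<in>S. (cmod (a \<nu>) * norm (\<iota> (g \<nu>)))\<^sup>2)"
    using S by (intro sum_mono2) auto
  also have "\<dots> = (norm ((z - \<mu>) *\<^sub>C resolvent \<iota> T z x - x))\<^sup>2"
    unfolding Ax norm_sum_eigenvectors_square[OF sym S g] ..
  finally show ?thesis
    by (rule power2_le_imp_le) simp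
qed

lemma infdist_eigen_span_le:
  fixes \<iota> :: "'v::complex_inner \<Rightarrow> 'w::complex_inner"
  assumes cl: "clinear \<iota>" "clinear T" and sym: "symmetric_op \<iota> T" and pp: "pure_point_spectrum \<iota> T"
    and rok: "resolvent_ok \<iota> T z" and "c \<ge> 0"
    and sep: "\<And>\<nu> e. e \<in> eigenspace \<iota> T \<nu> \<Longrightarrow> e \<noteq> 0 \<Longrightarrow> \<nu> \<notin> K \<Longrightarrow> c * cmod (z - \<nu>) \<le> cmod (\<nu> - \<mu>)"
  shows "c * infdist x (eigen_span \<iota> T K) \<le> norm ((z - \<mu>) *\<^sub>C resolvent \<iota> T z x - x)"
proof -
  let ?A = "\<lambda>x. (z - \<mu>) *\<^sub>C resolvent \<iota> T z x - x"
  have "bounded_linear (\<lambda>x. (z - \<mu>) *\<^sub>C resolvent \<iota> T z x)"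
    by (rule bounded_linear_compose[OF bounded_linear_scaleC bounded_linear_resolvent[OF rok]])
  then have cont: "continuous_on UNIV (\<lambda>x. norm (?A x))"
    by (intro continuous_on_norm continuous_on_diff[OF linear_continuous_on continuous_on_id])
  have "closed {x. c * infdist x (eigen_span \<iota> T K) \<le> norm (?A x)}"
    by (rule closed_Collect_le[OF _ cont]) (intro continuous_intros)
  moreover have "eigen_span \<iota> T UNIV \<subseteq> {x. c * infdist x (eigen_span \<iota> T K) \<le> norm (?A x)}"
  proof
    fix x assume "x \<in> eigen_span \<iota> T UNIV"
    then obtain S g where S: "finite S" and g: "\<And>\<nu>. g \<nu> \<in> eigenspace \<iota> T \<nu>"
      and x: "x = (\<Sum>\<nu>\<in>S. \<iota> (g \<nu>))"
      using eigen_span_sum_eigenvectors[OF cl] by meson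
    show "x \<in> {x. c * infdist x (eigen_span \<iota> T K) \<le> norm (?A x)}"
      using infdist_eigen_span_le_sum[OF cl sym rok \<open>c \<ge> 0\<close> sep S g x] by (rule CollectI)
  qed
  ultimately have "closure (eigen_span \<iota> T UNIV) \<subseteq> {x. c * infdist x (eigen_span \<iota> T K) \<le> norm (?A x)}"
    by (rule closure_minimal[rotated])
  moreover have "closure (eigen_span \<iota> T UNIV) = UNIV"
    using pp by (simp add: pure_point_spectrum_def eigen_span_def)
  ultimately have "x \<in> {x. c * infdist x (eigen_span \<iota> T K) \<le> norm (?A x)}"
    by blast
  then show ?thesis
    by simp
qed

lemma infdist_isolated_eigenspace_le:
  fixes \<iota> :: "'v::complex_inner \<Rightarrow> 'w::complex_inner"
  assumes cl: "clinear \<iota>" "clinear T" and sym: "symmetric_op \<iota> T" and pp: "pure_point_spectrum \<iota> T"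
    and "\<delta> > 0" and gap: "\<And>\<nu>. \<nu> \<in> cspectrum \<iota> T \<Longrightarrow> \<nu> \<noteq> lam \<Longrightarrow> 3 * \<delta> < cmod (\<nu> - lam)"
    and z: "cmod (z - lam) = \<delta>" and \<mu>: "cmod (\<mu> - lam) \<le> \<delta>"
  shows "infdist (\<iota> v) (eigen_span \<iota> T {lam}) \<le> 2 * norm (resolvent \<iota> T z (T v - \<mu> *\<^sub>C \<iota> v))"
proof -
  have rok: "resolvent_ok \<iota> T z"
    using gap[of z] z \<open>\<delta> > 0\<close> by (force simp: cspectrum_def)
  have "1 / 2 * cmod (z - \<nu>) \<le> cmod (\<nu> - \<mu>)"
    if "e \<in> eigenspace \<iota> T \<nu>" "e \<noteq> 0" "\<nu> \<notin> {lam}" for \<nu> e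
  proof -
    have "3 * \<delta> < cmod (\<nu> - lam)"
      using gap eigenvalue_in_cspectrum[OF cl that(1,2)] that(3) by blast
    moreover have "cmod (z - \<nu>) \<le> cmod (z - lam) + cmod (\<nu> - lam)"
      using norm_triangle_ineq4[of "z - lam" "\<nu> - lam"] by simp
    moreover have "cmod (\<nu> - lam) \<le> cmod (\<nu> - \<mu>) + cmod (\<mu> - lam)"
      using norm_triangle_ineq[of "\<nu> - \<mu>" "\<mu> - lam"] by simp
    ultimately show ?thesis
      using z \<mu> by linarith
  qed
  then show ?thesis
    using infdist_eigen_span_le[OF cl sym pp rok, of "1 / 2" "{lam}" \<mu> "\<iota> v"] resolvent_defect[OF rok]
    by simp
qed

lemma infdist_eigen_span_disc_le:
  fixes \<iota> :: "'v::complex_inner \<Rightarrow> 'w::complex_inner"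
  assumes cl: "clinear \<iota>" "clinear T" and sym: "symmetric_op \<iota> T" and pp: "pure_point_spectrum \<iota> T"
    and rok: "resolvent_ok \<iota> T z" and z: "cmod (z - lam) = \<delta>"
  shows "infdist (\<iota> u) (eigen_span \<iota> T {\<nu>. cmod (\<nu> - lam) < \<delta>})
    \<le> 2 * norm (resolvent \<iota> T z (T u - lam *\<^sub>C \<iota> u))"
proof -
  have "1 / 2 * cmod (z - \<nu>) \<le> cmod (\<nu> - lam)" if "\<nu> \<notin> {\<nu>. cmod (\<nu> - lam) < \<delta>}" for \<nu>
    using norm_triangle_ineq4[of "z - lam" "\<nu> - lam"] z that by simp
  then show ?thesis
    using infdist_eigen_span_le[OF cl sym pp rok, of "1 / 2" "{\<nu>. cmod (\<nu> - lam) < \<delta>}" lam "\<iota> u"]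
      resolvent_defect[OF rok]
    by simp
qed

section \<open>Comparison of multiplicities\<close>

lemma exists_pos_mult_square_less_one: "\<exists>r > 0. (real n + 1) * r\<^sup>2 < 1"
proof (intro exI conjI)
  show "1 / (real n + 2) > 0"
    by simp
  have "real n + 1 < real n + 2"
    by simp
  also have "\<dots> \<le> (real n + 2)\<^sup>2"
    by (simp add: power2_eq_square)
  finally show "(real n + 1) * (1 / (real n + 2))\<^sup>2 < 1"
    by (simp add: power_divide divide_less_eq)
qed

lemma finite_eigenvalues_if_orthonormal_finite:
  fixes \<iota> :: "'v::complex_inner \<Rightarrow> 'w::complex_inner"
  assumes cl: "clinear \<iota>" "inj \<iota>" "clinear T" and sym: "symmetric_op \<iota> T"
    and fin: "\<And>F. orthonormal F \<Longrightarrow> F \<subseteq> \<iota> ` (\<Union>\<mu>\<in>K. eigenspace \<iota> T \<mu>) \<Longrightarrow> finite F"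
  shows "finite {\<mu>. is_eigenvalue \<iota> T \<mu> \<and> \<mu> \<in> K}" (is "finite ?Sig")
proof -
  have "\<forall>\<mu>\<in>?Sig. \<exists>v. v \<in> eigenspace \<iota> T \<mu> \<and> norm (\<iota> v) = 1"
    using unit_eigenvector_exists[OF cl] by blast
  then obtain e where e: "\<And>\<mu>. \<mu> \<in> ?Sig \<Longrightarrow> e \<mu> \<in> eigenspace \<iota> T \<mu>"
      "\<And>\<mu>. \<mu> \<in> ?Sig \<Longrightarrow> norm (\<iota> (e \<mu>)) = 1"
    by (metis bchoice)
  have orth: "cinner (\<iota> (e \<mu>)) (\<iota> (e \<mu>')) = 0" if "\<mu> \<in> ?Sig" "\<mu>' \<in> ?Sig" "\<mu> \<noteq> \<mu>'" for \<mu> \<mu>'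
    using cinner_eigenvectors_eq_0[OF sym e(1) e(1)] that by blast
  have "inj_on (\<iota> \<circ> e) ?Sig"
  proof (rule inj_onI, rule ccontr)
    fix \<mu> \<mu>' assume "\<mu> \<in> ?Sig" "\<mu>' \<in> ?Sig" "(\<iota> \<circ> e) \<mu> = (\<iota> \<circ> e) \<mu>'" "\<mu> \<noteq> \<mu>'"
    then show False
      using orth[of \<mu> \<mu>'] e(2)[of \<mu>] by simp
  qed
  moreover have "orthonormal ((\<iota> \<circ> e) ` ?Sig)"
    using orth e(2) by (auto simp: orthonormal_def)
  moreover have "(\<iota> \<circ> e) ` ?Sig \<subseteq> \<iota> ` (\<Union>\<mu>\<in>K. eigenspace \<iota> T \<mu>)"
  proof
    fix w assume "w \<in> (\<iota> \<circ> e) ` ?Sig"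
    then obtain \<mu> where "\<mu> \<in> ?Sig" "w = \<iota> (e \<mu>)"
      by auto
    then show "w \<in> \<iota> ` (\<Union>\<mu>\<in>K. eigenspace \<iota> T \<mu>)"
      using e(1) by blast
  qed
  ultimately show ?thesis
    using fin finite_imageD by blast
qed

lemma geom_mult_cluster_eq_card:
  fixes \<iota> :: "'v::complex_inner \<Rightarrow> 'w::complex_inner" and T :: "'v \<Rightarrow> 'w"
  assumes cl: "clinear \<iota>" "inj \<iota>" "clinear T" and sym: "symmetric_op \<iota> T"
    and Q: "finite Q" "orthonormal Q" and r: "(real (card Q) + 1) * r\<^sup>2 < 1"
    and near_Q: "\<And>\<mu> v. \<mu> \<in> K \<Longrightarrow> v \<in> eigenspace \<iota> T \<mu> \<Longrightarrow> norm (\<iota> v) = 1 \<Longrightarrow>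
                   infdist (\<iota> v) (cvs.span Q) \<le> r"
    and near_eig: "\<And>q. q \<in> Q \<Longrightarrow> infdist q (eigen_span \<iota> T K) \<le> r"
  defines "Sig \<equiv> {\<mu>. is_eigenvalue \<iota> T \<mu> \<and> \<mu> \<in> K}"
  shows "finite Sig \<and> (\<forall>\<mu>\<in>K. finite_geom_mult \<iota> T \<mu>) \<and> (\<Sum>\<mu>\<in>Sig. geom_mult \<iota> T \<mu>) = card Q"
proof -
  have card_le: "finite F \<and> card F \<le> card Q"
    if F: "orthonormal F" "F \<subseteq> \<iota> ` (\<Union>\<mu>\<in>K. eigenspace \<iota> T \<mu>)" for F
  proof (rule finite_card_le_orthonormal_near_span[OF Q(2,1) r F(1)])
    fix f assume "f \<in> F"
    then obtain \<mu> v where "\<mu> \<in> K" "v \<in> eigenspace \<iota> T \<mu>" "f = \<iota> v" "norm f = 1"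
      using F by (auto simp: orthonormal_def)
    then show "infdist f (cvs.span Q) \<le> r"
      using near_Q by blast
  qed
  have fgm: "finite_geom_mult \<iota> T \<mu>" if "\<mu> \<in> K" for \<mu>
  proof (rule finite_geom_mult_if_orthonormal_card_bounded[OF cl])
    fix F assume "finite F" "orthonormal F" "F \<subseteq> \<iota> ` eigenspace \<iota> T \<mu>"
    then show "card F \<le> card Q"
      using card_le[of F] that by blast
  qed
  have "finite Sig"
    unfolding Sig_def by (rule finite_eigenvalues_if_orthonormal_finite[OF cl sym]) (use card_le in blast)
  have "\<exists>U. finite U \<and> orthonormal U \<and> U \<subseteq> \<iota> ` (\<Union>\<mu>\<in>Sig. eigenspace \<iota> T \<mu>) \<and>
      card U = (\<Sum>\<mu>\<in>Sig. geom_mult \<iota> T \<mu>) \<and> cvs.span U = eigen_span \<iota> T Sig"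
    using fgm by (intro orthonormal_basis_eigen_span[OF cl sym \<open>finite Sig\<close>]) (simp add: Sig_def)
  then obtain U where U: "finite U" "orthonormal U" "U \<subseteq> \<iota> ` (\<Union>\<mu>\<in>Sig. eigenspace \<iota> T \<mu>)"
      "card U = (\<Sum>\<mu>\<in>Sig. geom_mult \<iota> T \<mu>)" "cvs.span U = eigen_span \<iota> T Sig"
    by blast
  have "U \<subseteq> \<iota> ` (\<Union>\<mu>\<in>K. eigenspace \<iota> T \<mu>)"
    using U(3) unfolding Sig_def by blast
  then have "card U \<le> card Q"
    using card_le[OF U(2)] by blast
  moreover have "card Q \<le> card U"
  proof (rule finite_card_le_orthonormal_near_span[OF U(2,1) _ Q(2), THEN conjunct2])
    have "(real (card U) + 1) * r\<^sup>2 \<le> (real (card Q) + 1) * r\<^sup>2"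
      using \<open>card U \<le> card Q\<close> by (intro mult_right_mono) simp_all
    then show "(real (card U) + 1) * r\<^sup>2 < 1"
      using r by linarith
    have "cvs.span U = eigen_span \<iota> T K"
      using U(5) eigen_span_eigenvalues[OF cl(1,3)] unfolding Sig_def by simp
    then show "infdist q (cvs.span U) \<le> r" if "q \<in> Q" for q
      using near_eig[OF that] by simp
  qed
  ultimately show ?thesis
    using \<open>finite Sig\<close> fgm U(4) by simp
qed

lemma geom_mult_eq_sum_perturbed:
  fixes \<iota> :: "'v::complex_inner \<Rightarrow> 'w::complex_inner" and S T :: "'v \<Rightarrow> 'w"
  assumes cl: "clinear \<iota>" "inj \<iota>" "clinear S" "clinear T"
    and sym: "symmetric_op \<iota> S" "symmetric_op \<iota> T"
    and pp: "pure_point_spectrum \<iota> S" "pure_point_spectrum \<iota> T"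
    and "\<delta> > 0" and gap: "\<And>\<nu>. \<nu> \<in> cspectrum \<iota> S \<Longrightarrow> \<nu> \<noteq> lam \<Longrightarrow> 3 * \<delta> < cmod (\<nu> - lam)"
    and z: "cmod (z - lam) = \<delta>" and rok: "resolvent_ok \<iota> T z"
    and Q: "finite Q" "orthonormal Q" "cvs.span Q = \<iota> ` eigenspace \<iota> S lam"
    and r: "(real (card Q) + 1) * r\<^sup>2 < 1"
    and small_S: "\<And>\<mu> v. cmod (\<mu> - lam) < \<delta> \<Longrightarrow> v \<in> eigenspace \<iota> T \<mu> \<Longrightarrow> norm (\<iota> v) = 1 \<Longrightarrow>
                   norm (resolvent \<iota> S z (S v - T v)) < r / 2"
    and small_T: "\<And>q. q \<in> Q \<Longrightarrow> norm (resolvent \<iota> T z (S (inv \<iota> q) - T (inv \<iota> q))) < r / 2"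
  shows "finite {\<mu>. is_eigenvalue \<iota> T \<mu> \<and> cmod (\<mu> - lam) < \<delta>} \<and>
    (\<forall>\<mu>. is_eigenvalue \<iota> T \<mu> \<and> cmod (\<mu> - lam) < \<delta> \<longrightarrow> finite_geom_mult \<iota> T \<mu>) \<and>
    card Q = (\<Sum>\<mu>\<in>{\<mu>. is_eigenvalue \<iota> T \<mu> \<and> cmod (\<mu> - lam) < \<delta>}. geom_mult \<iota> T \<mu>)"
proof -
  let ?K = "{\<mu>. cmod (\<mu> - lam) < \<delta>}"
  have "finite {\<mu>. is_eigenvalue \<iota> T \<mu> \<and> \<mu> \<in> ?K} \<and> (\<forall>\<mu>\<in>?K. finite_geom_mult \<iota> T \<mu>) \<and>
      (\<Sum>\<mu>\<in>{\<mu>. is_eigenvalue \<iota> T \<mu> \<and> \<mu> \<in> ?K}. geom_mult \<iota> T \<mu>) = card Q"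
  proof (rule geom_mult_cluster_eq_card[OF cl(1,2,4) sym(2) Q(1,2) r])
    fix \<mu> v assume "\<mu> \<in> ?K" "v \<in> eigenspace \<iota> T \<mu>" "norm (\<iota> v) = 1"
    then have "T v = \<mu> *\<^sub>C \<iota> v" "norm (resolvent \<iota> S z (S v - T v)) < r / 2"
      using small_S by (auto simp: eigenspace_def)
    moreover have "cvs.span Q = eigen_span \<iota> S {lam}"
      using Q(3) eigen_span_singleton[OF cl(1,3)] by simp
    ultimately show "infdist (\<iota> v) (cvs.span Q) \<le> r"
      using infdist_isolated_eigenspace_le[OF cl(1,3) sym(1) pp(1) \<open>\<delta> > 0\<close> gap z, of \<mu> v] \<open>\<mu> \<in> ?K\<close>
      by simp
  next
    fix q assume "q \<in> Q"
    then have "q \<in> \<iota> ` eigenspace \<iota> S lam"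
      using Q(3) cvs.span_superset by blast
    then obtain u where u: "u \<in> eigenspace \<iota> S lam" "q = \<iota> u"
      by blast
    then have "inv \<iota> q = u"
      using cl(2) by simp
    then have small: "norm (resolvent \<iota> T z (S u - T u)) < r / 2"
      using small_T[OF \<open>q \<in> Q\<close>] by simp
    have "S u = lam *\<^sub>C \<iota> u"
      using u(1) by (simp add: eigenspace_def)
    then have "norm (resolvent \<iota> T z (T u - lam *\<^sub>C \<iota> u)) = norm (resolvent \<iota> T z (S u - T u))"
      by (metis clinear_diff[OF clinear_resolvent[OF rok]] norm_minus_commute)
    then show "infdist q (eigen_span \<iota> T ?K) \<le> r"
      using infdist_eigen_span_disc_le[OF cl(1,4) sym(2) pp(2) rok z, of u] small u(2) by simp
  qed
  then show ?thesis
    by simp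
qed

lemma eventually_geom_mult_eq_sum:
  fixes \<iota> :: "'v::complex_inner \<Rightarrow> 'w::complex_inner" and S :: "'v \<Rightarrow> 'w" and T :: "nat \<Rightarrow> 'v \<Rightarrow> 'w"
  assumes cl: "clinear \<iota>" "inj \<iota>" "clinear S" "\<And>N. clinear (T N)"
    and sym: "symmetric_op \<iota> S" "\<And>N. symmetric_op \<iota> (T N)"
    and pp: "pure_point_spectrum \<iota> S" "\<And>N. pure_point_spectrum \<iota> (T N)"
    and fin: "finite_geom_mult \<iota> S lam"
    and "\<delta> > 0" and gap: "\<And>\<nu>. \<nu> \<in> cspectrum \<iota> S \<Longrightarrow> \<nu> \<noteq> lam \<Longrightarrow> 3 * \<delta> < cmod (\<nu> - lam)"
    and z: "cmod (z - lam) = \<delta>" and rok: "\<forall>\<^sub>F N in sequentially. resolvent_ok \<iota> (T N) z"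
    and conv_S: "\<And>\<epsilon>. \<epsilon> > 0 \<Longrightarrow> \<forall>\<^sub>F N in sequentially. \<forall>\<mu> v.
        cmod (\<mu> - lam) \<le> \<delta> \<and> v \<in> eigenspace \<iota> (T N) \<mu> \<and> norm (\<iota> v) = 1
        \<longrightarrow> norm (resolvent \<iota> S z (S v - T N v)) < \<epsilon>"
    and conv_T: "\<And>u \<epsilon>. u \<in> eigenspace \<iota> S lam \<Longrightarrow> norm (\<iota> u) = 1 \<Longrightarrow> \<epsilon> > 0 \<Longrightarrow>
        \<forall>\<^sub>F N in sequentially. norm (resolvent \<iota> (T N) z (S u - T N u)) < \<epsilon>"
  shows "\<forall>\<^sub>F N in sequentially.
    finite {\<mu>. is_eigenvalue \<iota> (T N) \<mu> \<and> cmod (\<mu> - lam) < \<delta>} \<and>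
    (\<forall>\<mu>. is_eigenvalue \<iota> (T N) \<mu> \<and> cmod (\<mu> - lam) < \<delta> \<longrightarrow> finite_geom_mult \<iota> (T N) \<mu>) \<and>
    geom_mult \<iota> S lam = (\<Sum>\<mu> \<in> {\<mu>. is_eigenvalue \<iota> (T N) \<mu> \<and> cmod (\<mu> - lam) < \<delta>}. geom_mult \<iota> (T N) \<mu>)"
proof -
  obtain Q where Q: "finite Q" "orthonormal Q" "cvs.span Q = \<iota> ` eigenspace \<iota> S lam"
      "card Q = geom_mult \<iota> S lam"
    using orthonormal_basis_eigenspace[OF cl(1-3) fin] .
  obtain r where "r > 0" and r: "(real (card Q) + 1) * r\<^sup>2 < 1"
    using exists_pos_mult_square_less_one by blast
  have "\<forall>\<^sub>F N in sequentially. \<forall>q\<in>Q. norm (resolvent \<iota> (T N) z (S (inv \<iota> q) - T N (inv \<iota> q))) < r / 2"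
  proof (intro eventually_ball_finite[OF Q(1)] ballI conv_T)
    fix q assume "q \<in> Q"
    then have "q \<in> \<iota> ` eigenspace \<iota> S lam" "norm q = 1"
      using Q(2,3) cvs.span_superset by (blast, simp add: orthonormal_def)
    then show "inv \<iota> q \<in> eigenspace \<iota> S lam" "norm (\<iota> (inv \<iota> q)) = 1"
      using cl(2) by auto
  qed (use \<open>r > 0\<close> in simp)
  with rok conv_S[OF half_gt_zero[OF \<open>r > 0\<close>]] show ?thesis
    unfolding Q(4)[symmetric]
  proof eventually_elim
    case (elim N)
    show ?case
    proof (rule geom_mult_eq_sum_perturbed[OF cl(1-4) sym pp \<open>\<delta> > 0\<close> gap z elim(1) Q(1-3) r])
      fix \<mu> v assume "cmod (\<mu> - lam) < \<delta>" "v \<in> eigenspace \<iota> (T N) \<mu>" "norm (\<iota> v) = 1"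
      then show "norm (resolvent \<iota> S z (S v - T N v)) < r / 2"
        using elim(2) less_imp_le by blast
    next
      fix q assume "q \<in> Q"
      then show "norm (resolvent \<iota> (T N) z (S (inv \<iota> q) - T N (inv \<iota> q))) < r / 2"
        using elim(3) by blast
    qed
  qed
qed

theorem theoremt:
  fixes \<iota> :: "'v::chilbert_space \<Rightarrow> 'w::chilbert_space"
    and L :: "'v \<Rightarrow> 'w"
    and LN :: "nat \<Rightarrow> 'v \<Rightarrow> 'w"
    and lam :: complex
    and \<delta> :: real
  assumes incl: "bounded_clinear \<iota>" "inj \<iota>" "closure (range \<iota>) = UNIV"
    and sep: "\<exists>D::'v set. countable D \<and> closure D = UNIV"
    and L_bdd: "bounded_clinear L"
    and L_sa: "self_adjoint_on \<iota> L"
    and L_pp: "pure_point_spectrum \<iota> L"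
    and LN_bdd: "\<And>N. bounded_clinear (LN N)"
    and LN_sa: "\<And>N. self_adjoint_on \<iota> (LN N)"
    and LN_pp: "\<And>N. pure_point_spectrum \<iota> (LN N)"
    and eig: "is_eigenvalue \<iota> L lam"
    and fin: "finite_geom_mult \<iota> L lam"
    and \<delta>_pos: "\<delta> > 0"
    and gap: "\<And>\<mu>. \<mu> \<in> cspectrum \<iota> L \<Longrightarrow> \<mu> \<noteq> lam \<Longrightarrow> cmod (\<mu> - lam) > 3 * \<delta>"
    and inv: "\<exists>N0. \<forall>N > N0. \<forall>z. \<delta> \<le> cmod (z - lam) \<and> cmod (z - lam) \<le> 2 * \<delta>
                 \<longrightarrow> resolvent_ok \<iota> (LN N) z"
    and conv1: "\<forall>\<epsilon>>0. \<exists>N1. \<forall>N > N1. \<forall>z \<mu> v.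
                  \<delta> \<le> cmod (z - lam) \<and> cmod (z - lam) \<le> 2 * \<delta> \<and>
                  cmod (\<mu> - lam) \<le> \<delta> \<and> v \<in> eigenspace \<iota> (LN N) \<mu> \<and> norm (\<iota> v) = 1
                  \<longrightarrow> norm (resolvent \<iota> L z (L v - LN N v)) < \<epsilon>"
    and conv2: "\<And>\<mu> u. cmod (\<mu> - lam) \<le> \<delta> \<Longrightarrow> u \<in> eigenspace \<iota> L \<mu> \<Longrightarrow> norm (\<iota> u) = 1 \<Longrightarrow>
                  \<forall>\<epsilon>>0. \<exists>N1. \<forall>N > N1. \<forall>z.
                  \<delta> \<le> cmod (z - lam) \<and> cmod (z - lam) \<le> 2 * \<delta>
                  \<longrightarrow> norm (resolvent \<iota> (LN N) z (L u - LN N u)) < \<epsilon>"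
  shows "\<exists>N0'. \<forall>N > N0'.
           finite {\<mu>. is_eigenvalue \<iota> (LN N) \<mu> \<and> cmod (\<mu> - lam) < \<delta>} \<and>
           (\<forall>\<mu>. is_eigenvalue \<iota> (LN N) \<mu> \<and> cmod (\<mu> - lam) < \<delta> \<longrightarrow> finite_geom_mult \<iota> (LN N) \<mu>) \<and>
           geom_mult \<iota> L lam =
             (\<Sum>\<mu> \<in> {\<mu>. is_eigenvalue \<iota> (LN N) \<mu> \<and> cmod (\<mu> - lam) < \<delta>}. geom_mult \<iota> (LN N) \<mu>)"
proof -
  have cl: "clinear \<iota>" "clinear L" "\<And>N. clinear (LN N)"
    using incl(1) L_bdd LN_bdd by (simp_all add: bounded_clinear_def)
  have sym: "symmetric_op \<iota> L" "\<And>N. symmetric_op \<iota> (LN N)"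
    using L_sa LN_sa by (simp_all add: self_adjoint_on_imp_symmetric_op)
  (* One point z with |z - lam| = \<delta> suffices. *)
  define z where "z = lam + complex_of_real \<delta>"
  have z: "cmod (z - lam) = \<delta>" and annulus: "\<delta> \<le> cmod (z - lam) \<and> cmod (z - lam) \<le> 2 * \<delta>"
    using \<delta>_pos by (simp_all add: z_def)
  show ?thesis
    unfolding eventually_at_top_dense[symmetric]
  proof (rule eventually_geom_mult_eq_sum[OF cl(1) incl(2) cl(2,3) sym L_pp LN_pp fin \<delta>_pos gap z])
    show "\<forall>\<^sub>F N in sequentially. resolvent_ok \<iota> (LN N) z"
      using inv annulus unfolding eventually_at_top_dense by blast
    show "\<forall>\<^sub>F N in sequentially. \<forall>\<mu> v. cmod (\<mu> - lam) \<le> \<delta> \<and> v \<in> eigenspace \<iota> (LN N) \<mu> \<and>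
        norm (\<iota> v) = 1 \<longrightarrow> norm (resolvent \<iota> L z (L v - LN N v)) < \<epsilon>" if "\<epsilon> > 0" for \<epsilon>
      using conv1[rule_format, OF that] annulus unfolding eventually_at_top_dense by blast
    show "\<forall>\<^sub>F N in sequentially. norm (resolvent \<iota> (LN N) z (L u - LN N u)) < \<epsilon>"
      if "u \<in> eigenspace \<iota> L lam" "norm (\<iota> u) = 1" "\<epsilon> > 0" for u \<epsilon>
    proof -
      have "cmod (lam - lam) \<le> \<delta>"
        using \<delta>_pos by simp
      then show ?thesis
        using conv2[OF _ that(1,2), rule_format, OF _ that(3)] annulus
        unfolding eventually_at_top_dense by blast
    qed
  qed
qed

end
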